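(* Let $\alpha>0$ and $k\ge 2$ be an integer. Then $$\sum_{\sigma\in\mathfrak S_k}\det\Big[\Gamma(1+\sigma(i)\alpha)\,\Gamma(j+\sigma(i)\alpha)\prod_{r=1}^{i-1}(r+\sigma(i)\alpha)\Big]_{1\le i,j\le k}=\alpha^{k(k-1)}\Big(\prod_{j=1}^k (j-1)!\,\Gamma(1+\alpha j)\Big)^2.$$
   Context: $\mathfrak S_k$ is the symmetric group on $\{1,\dots,k\}$; in the matrix, $i$ is the row index and $j$ the column index, and empty products equal $1$. *)

theory Defs
  imports "HOL-Analysis.Analysis" "Jordan_Normal_Form.Determinant"
begin

(* The k x k matrix of the statement, for a permutation sigma of {1..k}.
   Jordan_Normal_Form matrices are 0-indexed: entry (i,j) with i,j < k
   corresponds to the paper's row i+1, column j+1. *)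
definition gamma_mat :: "real \<Rightarrow> nat \<Rightarrow> (nat \<Rightarrow> nat) \<Rightarrow> real mat" where
  "gamma_mat \<alpha> k \<sigma> = mat k k (\<lambda>(i, j).
      Gamma (1 + real (\<sigma> (i + 1)) * \<alpha>) * Gamma (real (j + 1) + real (\<sigma> (i + 1)) * \<alpha>)
      * (\<Prod>r = 1..i. (real r + real (\<sigma> (i + 1)) * \<alpha>)))"

end

theory Submission
  imports Defs
begin

text \<open>Put \<open>x m = 1 + m \<alpha>\<close> and write \<open>(x)\<^sub>j\<close> for the rising factorial. Since
  \<open>\<Gamma>(x + j) = \<Gamma>(x) (x)\<^sub>j\<close> and \<open>(r + x - 1)\<close> for \<open>r = 1..i\<close> multiply to \<open>(x)\<^sub>i\<close>, row \<open>i\<close> of the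
  \<open>\<sigma>\<close>-th matrix is row \<open>\<sigma> i\<close> of \<open>B = ((x m)\<^sub>j)\<close> scaled by \<open>\<Gamma>(x (\<sigma> i))\<^sup>2 (x (\<sigma> i))\<^sub>i\<close>.
  Hence its determinant is \<open>sign \<sigma> \<cdot> \<Prod>\<^sub>i \<Gamma>(x (\<sigma> i))\<^sup>2 (x (\<sigma> i))\<^sub>i \<cdot> det B\<close>, and by the Leibniz
  formula the sum over \<open>\<sigma>\<close> is \<open>det (\<Gamma>(x m)\<^sup>2 (x m)\<^sub>i) \<cdot> det B = \<Prod>\<^sub>m \<Gamma>(x m)\<^sup>2 \<cdot> (det B)\<^sup>2\<close>.
  Finally \<open>B\<close> is a Vandermonde matrix in the basis of rising factorials, so \<open>det B\<close> is the
  product of the differences \<open>x m' - x m = (m' - m) \<alpha>\<close> over \<open>m < m'\<close>.\<close>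

lemma det_mat_row_scale:
  fixes c :: "nat \<Rightarrow> 'a::comm_ring_1"
  shows "det (mat n n (\<lambda>(i, j). c i * B i j)) = (\<Prod>i<n. c i) * det (mat n n (\<lambda>(i, j). B i j))"
proof -
  have "mat n n (\<lambda>(i, j). c i * B i j) = mat\<^sub>r n n (\<lambda>i. c i \<cdot>\<^sub>v vec n (B i))"
    and "mat n n (\<lambda>(i, j). B i j) = mat\<^sub>r n n (\<lambda>i. vec n (B i))"
    by (auto intro!: eq_matI)
  then show ?thesis
    by (simp add: det_rows_mul atLeast0LessThan)
qed

lemma det_mat_transpose_indices:
  fixes f :: "nat \<Rightarrow> nat \<Rightarrow> 'a::comm_ring_1"
  shows "det (mat n n (\<lambda>(i, j). f j i)) = det (mat n n (\<lambda>(i, j). f i j))"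
proof -
  have "transpose_mat (mat n n (\<lambda>(i, j). f i j)) = mat n n (\<lambda>(i, j). f j i)"
    by (rule eq_matI) auto
  then show ?thesis
    by (metis det_transpose mat_carrier)
qed

text \<open>Right multiplication by a unitriangular matrix replaces column \<open>j + 1\<close> by itself minus
  \<open>x 0 + j\<close> times column \<open>j\<close>; since \<open>pochhammer (x i) (j + 1) = pochhammer (x i) j * (x i + j)\<close>,
  the new entries are \<open>(x i - x 0) * pochhammer (x i) j\<close> and a Laplace expansion along row 0
  leaves the same determinant for the remaining nodes.\<close>

lemma det_pochhammer_vandermonde:
  fixes x :: "nat \<Rightarrow> 'a::comm_ring_1"
  shows "det (mat n n (\<lambda>(i, j). pochhammer (x i) j)) = (\<Prod>i'<n. \<Prod>i<i'. x i' - x i)"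
proof (induction n arbitrary: x)
  case 0
  then show ?case by simp
next
  case (Suc n)
  define A where "A = mat (Suc n) (Suc n) (\<lambda>(i, j). pochhammer (x i) j)"
  define U where "U = mat (Suc n) (Suc n)
    (\<lambda>(l, j). if l = j then 1 else if j = Suc l then - (x 0 + of_nat l) else (0::'a))"
  define B where "B = mat (Suc n) (Suc n)
    (\<lambda>(i, j). if j = 0 then 1 else (x i - x 0) * pochhammer (x i) (j - 1))"
  have A: "A \<in> carrier_mat (Suc n) (Suc n)" and U: "U \<in> carrier_mat (Suc n) (Suc n)"
    and B: "B \<in> carrier_mat (Suc n) (Suc n)"
    unfolding A_def U_def B_def by auto
  have "upper_triangular U"
    unfolding U_def by (intro upper_triangularI) auto
  moreover have "diag_mat U = replicate (Suc n) 1"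
    unfolding diag_mat_def by (rule nth_equalityI) (simp_all add: U_def del: upt_Suc replicate_Suc)
  ultimately have det_U: "det U = 1"
    using det_upper_triangular[OF _ U] by simp
  have "A * U = B"
  proof (rule eq_matI)
    fix i j assume "i < dim_row B" "j < dim_col B"
    then have i: "i < Suc n" and j: "j < Suc n" by (auto simp: B_def)
    have "(A * U) $$ (i, j) = (\<Sum>l<Suc n. A $$ (i, l) * U $$ (l, j))"
      using i j A U by (simp add: scalar_prod_def lessThan_atLeast0)
    also have "\<dots> = (\<Sum>l<Suc n. (if l = j then pochhammer (x i) l else 0)
        + (if Suc l = j then - (x 0 + of_nat l) * pochhammer (x i) l else 0))"
      by (rule sum.cong) (use i j in \<open>auto simp: A_def U_def\<close>)
    also have "\<dots> = B $$ (i, j)"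
      using i j by (cases j) (auto simp: sum.distrib sum.delta B_def pochhammer_Suc algebra_simps
          simp del: sum.lessThan_Suc)
    finally show "(A * U) $$ (i, j) = B $$ (i, j)" .
  qed (use A U B in auto)
  then have "det A = det B"
    using det_mult[OF A U] det_U by simp
  also have "\<dots> = (\<Sum>j<Suc n. B $$ (0, j) * cofactor B 0 j)"
    by (rule laplace_expansion_row[OF B]) simp
  also have "\<dots> = (\<Sum>j<Suc n. if j = 0 then cofactor B 0 0 else 0)"
    by (rule sum.cong) (auto simp: B_def)
  also have "\<dots> = det (mat_delete B 0 0)"
    by (simp add: cofactor_def)
  also have "mat_delete B 0 0 = mat n n (\<lambda>(i, j). (x (Suc i) - x 0) * pochhammer (x (Suc i)) j)"
    unfolding mat_delete_def B_def by (rule eq_matI) auto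
  also have "det \<dots> = (\<Prod>i<n. x (Suc i) - x 0) * (\<Prod>i'<n. \<Prod>i<i'. x (Suc i') - x (Suc i))"
    by (simp add: det_mat_row_scale Suc.IH)
  also have "\<dots> = (\<Prod>i'<Suc n. \<Prod>i<i'. x i' - x i)"
    by (simp add: prod.lessThan_Suc_shift prod.distrib del: prod.lessThan_Suc)
  finally show ?case
    unfolding A_def .
qed

lemma det_pochhammer_arith_progression:
  fixes c d :: "'a::{comm_ring_1, ring_char_0}"
  shows "det (mat n n (\<lambda>(i, j). pochhammer (c + of_nat i * d) j)) = (\<Prod>m<n. d ^ m * fact m)"
proof -
  have "(\<Prod>i<m. (c + of_nat m * d) - (c + of_nat i * d)) = d ^ m * fact m" for m
  proof -
    have "(\<Prod>i<m. (c + of_nat m * d) - (c + of_nat i * d)) = (\<Prod>i<m. d * of_nat (m - i))"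
      by (intro prod.cong) (auto simp: of_nat_diff algebra_simps)
    then show ?thesis
      by (simp add: prod.distrib fact_prod_rev atLeast0LessThan mult.commute)
  qed
  then show ?thesis
    by (simp add: det_pochhammer_vandermonde)
qed

lemma sum_permutes_det_scaled_permuted_rows:
  fixes a b :: "nat \<Rightarrow> nat \<Rightarrow> 'a::comm_ring_1"
  shows "(\<Sum>\<pi> | \<pi> permutes {0..<n}. det (mat n n (\<lambda>(i, j). a (\<pi> i) i * b (\<pi> i) j)))
       = det (mat n n (\<lambda>(i, m). a m i)) * det (mat n n (\<lambda>(m, j). b m j))"
proof -
  define A where "A = mat n n (\<lambda>(i, m). a m i)"
  define B where "B = mat n n (\<lambda>(m, j). b m j)"
  have A: "A \<in> carrier_mat n n" and B: "B \<in> carrier_mat n n"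
    unfolding A_def B_def by auto
  have "det (mat n n (\<lambda>(i, j). a (\<pi> i) i * b (\<pi> i) j))
      = det B * (signof \<pi> * (\<Prod>i = 0..<n. A $$ (i, \<pi> i)))" if \<pi>: "\<pi> permutes {0..<n}" for \<pi>
  proof -
    have \<pi>_less: "i < n \<Longrightarrow> \<pi> i < n" for i
      using permutes_in_image[OF \<pi>] by simp
    have "mat n n (\<lambda>(i, j). b (\<pi> i) j) = mat n n (\<lambda>(i, j). B $$ (\<pi> i, j))"
      by (rule eq_matI) (auto simp: B_def \<pi>_less)
    moreover have "(\<Prod>i = 0..<n. A $$ (i, \<pi> i)) = (\<Prod>i<n. a (\<pi> i) i)"
      by (simp add: A_def \<pi>_less atLeast0LessThan)
    ultimately show ?thesis
      using det_mat_row_scale[where c = "\<lambda>i. a (\<pi> i) i" and B = "\<lambda>i. b (\<pi> i)"] det_permute_rows[OF B \<pi>]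
      by simp
  qed
  then have "(\<Sum>\<pi> | \<pi> permutes {0..<n}. det (mat n n (\<lambda>(i, j). a (\<pi> i) i * b (\<pi> i) j)))
      = det B * det A"
    by (simp add: det_def'[OF A] sum_distrib_left)
  then show ?thesis
    by (simp add: A_def B_def)
qed

lemma sum_permutes_atLeastAtMost_1:
  "(\<Sum>\<sigma> | \<sigma> permutes {1..n}. f \<sigma>)
     = (\<Sum>\<pi> | \<pi> permutes {0..<n}. f (\<lambda>m. if m \<in> {1..n} then Suc (\<pi> (m - 1)) else m))"
proof -
  have Suc: "bij_betw Suc {0..<n} {1..n}"
    by (simp add: bij_betw_def atLeastLessThanSuc_atLeastAtMost)
  have inv_Suc: "inv_into {0..<n} Suc m = m - 1" if "m \<in> {1..n}" for m
    using that by (intro inv_into_f_eq) auto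
  have "(\<Sum>\<sigma> | \<sigma> permutes {1..n}. f \<sigma>) = (\<Sum>\<pi> | \<pi> permutes {0..<n}.
      f (\<lambda>m. if m \<in> {1..n} then Suc (\<pi> (inv_into {0..<n} Suc m)) else m))"
    using sum.reindex_bij_betw[OF bij_betw_permutations[OF Suc], of f] by simp
  also have "\<dots> = (\<Sum>\<pi> | \<pi> permutes {0..<n}. f (\<lambda>m. if m \<in> {1..n} then Suc (\<pi> (m - 1)) else m))"
    by (intro sum.cong refl arg_cong[where f = f]) (auto simp: fun_eq_iff inv_Suc)
  finally show ?thesis .
qed

lemma Gamma_mult_Gamma_shift_mult_prod:
  fixes s :: real
  assumes "1 + s \<notin> \<int>\<^sub>\<le>\<^sub>0"
  shows "Gamma (1 + s) * Gamma (real (j + 1) + s) * (\<Prod>r = 1..i. real r + s)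
       = Gamma (1 + s) ^ 2 * pochhammer (1 + s) i * pochhammer (1 + s) j"
proof -
  have "Gamma (real (j + 1) + s) = pochhammer (1 + s) j * Gamma (1 + s)"
    using pochhammer_Gamma[OF assms, of j] Gamma_nonzero[OF assms] by (simp add: algebra_simps)
  moreover have "(\<Prod>r = 1..i. real r + s) = pochhammer (1 + s) i"
    by (simp add: pochhammer_prod atLeast0LessThan prod.atLeast1_atMost_eq algebra_simps)
  ultimately show ?thesis
    by (simp add: power2_eq_square)
qed

lemma double_sum_lessThan: "2 * (\<Sum>m<k. m) = k * (k - 1 :: nat)"
  by (induction k) (auto simp: algebra_simps)

lemma gamma_mat_shifted_permutation:
  assumes "\<alpha> \<ge> 0" and \<pi>: "\<pi> permutes {0..<k}"
  shows "gamma_mat \<alpha> k (\<lambda>m. if m \<in> {1..k} then Suc (\<pi> (m - 1)) else m)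
       = mat k k (\<lambda>(i, j). Gamma (1 + real (Suc (\<pi> i)) * \<alpha>) ^ 2
           * pochhammer (1 + real (Suc (\<pi> i)) * \<alpha>) i * pochhammer (1 + real (Suc (\<pi> i)) * \<alpha>) j)"
    (is "?G = ?M")
proof (rule eq_matI)
  fix i j assume "i < dim_row ?M" and "j < dim_col ?M"
  moreover have "1 + real (Suc m) * \<alpha> \<notin> \<int>\<^sub>\<le>\<^sub>0" for m
  proof -
    have "0 < 1 + real (Suc m) * \<alpha>"
      using assms(1) by (intro add_pos_nonneg mult_nonneg_nonneg) simp_all
    then show ?thesis
      using nonpos_Ints_nonpos by fastforce
  qed
  ultimately show "?G $$ (i, j) = ?M $$ (i, j)"
    using permutes_in_image[OF \<pi>, of i] Gamma_mult_Gamma_shift_mult_prod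
    by (auto simp: gamma_mat_def Suc_le_eq simp del: of_nat_Suc)
qed (auto simp: gamma_mat_def)

theorem mainTheorem6:
  fixes \<alpha> :: real and k :: nat
  assumes "\<alpha> > 0" and "k \<ge> 2"
  shows "(\<Sum>\<sigma> | \<sigma> permutes {1..k}. det (gamma_mat \<alpha> k \<sigma>))
         = \<alpha> ^ (k * (k - 1)) * (\<Prod>j = 1..k. fact (j - 1) * Gamma (1 + \<alpha> * real j)) ^ 2"
proof -
  define x where "x m = 1 + real (Suc m) * \<alpha>" for m
  define B where "B = mat k k (\<lambda>(m, j). pochhammer (x m) j)"
  have "(\<Sum>\<sigma> | \<sigma> permutes {1..k}. det (gamma_mat \<alpha> k \<sigma>))
      = (\<Sum>\<pi> | \<pi> permutes {0..<k}.
          det (mat k k (\<lambda>(i, j). Gamma (x (\<pi> i)) ^ 2 * pochhammer (x (\<pi> i)) i * pochhammer (x (\<pi> i)) j)))"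
    unfolding sum_permutes_atLeastAtMost_1 x_def
    by (rule sum.cong) (use gamma_mat_shifted_permutation assms(1) in auto)
  also have "\<dots> = det (mat k k (\<lambda>(i, m). Gamma (x m) ^ 2 * pochhammer (x m) i)) * det B"
    unfolding B_def by (rule sum_permutes_det_scaled_permuted_rows)
  also have "det (mat k k (\<lambda>(i, m). Gamma (x m) ^ 2 * pochhammer (x m) i))
      = (\<Prod>m<k. Gamma (x m) ^ 2) * det B"
    unfolding B_def det_mat_transpose_indices[where f = "\<lambda>m i. Gamma (x m) ^ 2 * pochhammer (x m) i"]
    by (rule det_mat_row_scale)
  also have "det B = (\<Prod>m<k. \<alpha> ^ m * fact m)"
    using det_pochhammer_arith_progression[where c = "1 + \<alpha>" and d = \<alpha> and n = k]
    by (simp add: B_def x_def algebra_simps)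
  also have "(\<Prod>m<k. Gamma (x m) ^ 2) * (\<Prod>m<k. \<alpha> ^ m * fact m) * (\<Prod>m<k. \<alpha> ^ m * fact m)
      = (\<Prod>m<k. \<alpha> ^ m) ^ 2 * (\<Prod>m<k. fact m * Gamma (x m)) ^ 2"
    by (simp add: prod.distrib power2_eq_square prod_power_distrib[symmetric] ac_simps)
  also have "(\<Prod>m<k. \<alpha> ^ m) ^ 2 = \<alpha> ^ (k * (k - 1))"
    by (simp add: power_sum[symmetric] power_mult[symmetric] double_sum_lessThan mult.commute)
  also have "(\<Prod>m<k. fact m * Gamma (x m)) = (\<Prod>j = 1..k. fact (j - 1) * Gamma (1 + \<alpha> * real j))"
    by (simp add: prod.atLeast1_atMost_eq x_def mult.commute)
  finally show ?thesis .
qed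

end
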